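(* Let $G=(V,E)$ be an unweighted graph with $n$ vertices, and let $s,t\in V$. Then $$ B_{st}^{2}\leq n^{3}. $$
   Context: $L=D-A$ is the Laplacian of the unweighted graph $G$, $L^{+}$ its Moore–Penrose pseudoinverse, $L^{2+}=(L^+)^2$, and $1_v$ the indicator vector of vertex $v$. The biharmonic distance is $B_{st}=\sqrt{(1_s-1_t)^{T}L^{2+}(1_s-1_t)}$. *)

theory Defs
  imports "HOL-Analysis.Analysis"
begin

definition simple_graph :: "('n::finite \<Rightarrow> 'n \<Rightarrow> bool) \<Rightarrow> bool" where
  "simple_graph E \<longleftrightarrow> (\<forall>i j. E i j \<longrightarrow> E j i) \<and> (\<forall>i. \<not> E i i)"

definition degree :: "('n::finite \<Rightarrow> 'n \<Rightarrow> bool) \<Rightarrow> 'n \<Rightarrow> nat" where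
  "degree E i = card {j. E i j}"

definition laplacian :: "('n::finite \<Rightarrow> 'n \<Rightarrow> bool) \<Rightarrow> real^'n^'n" where
  "laplacian E = (\<chi> i j. (if i = j then real (degree E i) else 0) - (if E i j then 1 else 0))"

definition pinv :: "real^'n^'n \<Rightarrow> real^'n^'n" where
  "pinv A = (THE X. A ** X ** A = A \<and> X ** A ** X = X \<and>
                    transpose (A ** X) = A ** X \<and> transpose (X ** A) = X ** A)"

definition indic :: "'n::finite \<Rightarrow> real^'n" where
  "indic v = (\<chi> i. if i = v then 1 else 0)"

definition biharmonic_dist :: "('n::finite \<Rightarrow> 'n \<Rightarrow> bool) \<Rightarrow> 'n \<Rightarrow> 'n \<Rightarrow> real" where
  "biharmonic_dist E s t =
     (let Lp = pinv (laplacian E); x = indic s - indic t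
      in sqrt (x \<bullet> ((Lp ** Lp) *v x)))"

end

theory Submission
  imports Defs "HOL-Library.Transitive_Closure_Table"
begin

(* Let P average a vector over each connected component, i.e. project orthogonally onto ker L.
   Then L + P is invertible and L^+ = (L + P)^-1 - P, so y = L^+ (1_s - 1_t) satisfies P y = 0,
   L y = (1_s - 1_t) - P (1_s - 1_t) and B_st^2 = |y|^2.
   Fix a component C with k vertices and let W be the energy of y on C, each edge counted once.
   Pairing L y with y over C gives W = y_s [s in C] - y_t [t in C].  Cauchy-Schwarz along a simple
   path in C, which has at most k - 1 edges, gives (y_a - y_b)^2 <= (k - 1) W for a, b in C, and
   since y sums to zero on C, every y_u^2 is bounded by some (y_u - y_v)^2 with v in C.  Hence
   W^2 <= (k - 1) W, so W <= k - 1 and y_u^2 <= (k - 1)^2 <= n^2; summing over the n vertices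
   gives n^3. *)

lemma transpose_diff: "transpose (A - B) = transpose A - transpose (B :: 'a::ab_group_add^'n^'m)"
  by (simp add: transpose_def vec_eq_iff)

definition penrose :: "real^'n^'n \<Rightarrow> real^'n^'n \<Rightarrow> bool" where
  "penrose A X \<longleftrightarrow> A ** X ** A = A \<and> X ** A ** X = X \<and>
     transpose (A ** X) = A ** X \<and> transpose (X ** A) = X ** A"

lemma penrose_unique:
  assumes "penrose A X" and "penrose A Y"
  shows "Y = X"
proof -
  have x1: "A ** X ** A = A" and x2: "X ** A ** X = X"
    and x3: "transpose (A ** X) = A ** X" and x4: "transpose (X ** A) = X ** A"
    using assms(1) unfolding penrose_def by auto
  have y1: "A ** Y ** A = A" and y2: "Y ** A ** Y = Y"
    and y3: "transpose (A ** Y) = A ** Y" and y4: "transpose (Y ** A) = Y ** A"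
    using assms(2) unfolding penrose_def by auto
  have "X = X ** transpose (A ** X)"
    using x2 x3 by (simp add: matrix_mul_assoc)
  also have "\<dots> = X ** transpose (A ** Y ** A ** X)"
    using y1 by simp
  also have "\<dots> = X ** (transpose (A ** X) ** transpose (A ** Y))"
    by (simp add: matrix_transpose_mul matrix_mul_assoc)
  also have "\<dots> = X ** A ** Y"
    using x2 x3 y3 by (simp add: matrix_mul_assoc)
  finally have X_eq: "X = X ** A ** Y" .
  have "Y = transpose (Y ** A) ** Y"
    using y2 y4 by (simp add: matrix_mul_assoc)
  also have "\<dots> = transpose (Y ** A ** X ** A) ** Y"
    using x1 by (simp add: matrix_mul_assoc[symmetric])
  also have "\<dots> = transpose (X ** A) ** transpose (Y ** A) ** Y"
    by (simp add: matrix_transpose_mul matrix_mul_assoc)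
  also have "\<dots> = X ** A ** (Y ** A ** Y)"
    using x4 y4 by (simp add: matrix_mul_assoc)
  finally show "Y = X"
    using X_eq y2 by simp
qed

lemma pinv_eqI:
  assumes "penrose A X"
  shows "pinv A = X"
  unfolding pinv_def penrose_def[symmetric]
  by (rule the_equality) (use assms penrose_unique in blast)+

lemma penrose_transpose:
  assumes "transpose A = A" and "penrose A X"
  shows "penrose A (transpose X)"
proof -
  have x1: "A ** X ** A = A" and x2: "X ** A ** X = X"
    and x3: "transpose (A ** X) = A ** X" and x4: "transpose (X ** A) = X ** A"
    using assms(2) unfolding penrose_def by auto
  have transpose_mul3: "transpose (B ** C ** D) = transpose D ** transpose C ** transpose B"
    for B C D :: "real^'n^'n"
    by (simp add: matrix_transpose_mul matrix_mul_assoc)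
  have "A ** transpose X ** A = A"
    using transpose_mul3[of A X A] x1 assms(1) by simp
  moreover have "transpose X ** A ** transpose X = transpose X"
    using transpose_mul3[of X A X] x2 assms(1) by simp
  moreover have "transpose (A ** transpose X) = A ** transpose X"
    using x4 assms(1) by (simp add: matrix_transpose_mul)
  moreover have "transpose (transpose X ** A) = transpose X ** A"
    using x3 assms(1) by (simp add: matrix_transpose_mul)
  ultimately show ?thesis
    unfolding penrose_def by blast
qed

lemma penrose_symmetric: "transpose A = A \<Longrightarrow> penrose A X \<Longrightarrow> transpose X = X"
  using penrose_transpose penrose_unique by blast

lemma inner_square_symmetric:
  fixes X :: "real^'n^'n"
  assumes "transpose X = X"
  shows "x \<bullet> ((X ** X) *v x) = (X *v x) \<bullet> (X *v x)"
proof -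
  have "x \<bullet> ((X ** X) *v x) = (x v* X) \<bullet> (X *v x)"
    by (simp add: dot_lmul_matrix matrix_vector_mul_assoc)
  then show ?thesis
    by (metis assms transpose_matrix_vector)
qed

lemma exists_sq_le_sq_diff:
  fixes f :: "'a \<Rightarrow> real"
  assumes "finite C" and "u \<in> C" and "sum f C = 0"
  shows "\<exists>v\<in>C. (f u)\<^sup>2 \<le> (f u - f v)\<^sup>2"
proof -
  have "\<exists>v\<in>C. f u * f v \<le> 0"
  proof (rule ccontr)
    assume "\<not> ?thesis"
    then have "(\<Sum>v\<in>C. f u * f v) > 0"
      using assms(1,2) by (intro sum_pos) auto
    then show False
      using assms(3) by (simp add: sum_distrib_left[symmetric])
  qed
  then obtain v where "v \<in> C" and "f u * f v \<le> 0"
    by blast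
  moreover have "(f u - f v)\<^sup>2 = (f u)\<^sup>2 - 2 * (f u * f v) + (f v)\<^sup>2"
    by (simp add: power2_diff)
  ultimately show ?thesis
    using zero_le_power2[of "f v"] by (intro bexI[of _ v]) linarith+
qed

lemma rtrancl_path_nth:
  "rtrancl_path r x xs y \<Longrightarrow> (\<forall>i<length xs. r ((x#xs)!i) ((x#xs)!Suc i)) \<and> (x#xs)!length xs = y"
  by (induction rule: rtrancl_path.induct) (auto simp: less_Suc_eq_0_disj)

lemma rtrancl_path_reachable: "rtrancl_path r x xs y \<Longrightarrow> w \<in> set xs \<Longrightarrow> r\<^sup>*\<^sup>* x w"
proof (induction arbitrary: w rule: rtrancl_path.induct)
  case (step x y ys z)
  then show ?case
    using converse_rtranclp_into_rtranclp[of r x y] by auto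
qed simp

lemma laplacian_mult_vec:
  "(laplacian E *v z) $ i = (\<Sum>j\<in>UNIV. if E i j then z$i - z$j else 0)"
proof -
  have "(laplacian E *v z) $ i =
      (\<Sum>j\<in>UNIV. (if i = j then real (degree E i) * z$j else 0) - (if E i j then z$j else 0))"
    unfolding laplacian_def matrix_vector_mult_def
    by simp (intro sum.cong; auto simp: left_diff_distrib)
  also have "\<dots> = real (degree E i) * z$i - (\<Sum>j\<in>UNIV. if E i j then z$j else 0)"
    by (simp add: sum_subtractf)
  also have "\<dots> = (\<Sum>j\<in>{j. E i j}. z$i - z$j)"
    by (simp add: degree_def sum_subtractf sum.inter_filter[symmetric])
  also have "\<dots> = (\<Sum>j\<in>UNIV. if E i j then z$i - z$j else 0)"
    by (simp add: sum.inter_filter[symmetric])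
  finally show ?thesis .
qed

lemma sum_indic_mult:
  fixes f :: "'n::finite \<Rightarrow> real"
  shows "(\<Sum>i\<in>C. f i * indic s $ i) = (if s \<in> C then f s else 0)"
proof -
  have "f i * indic s $ i = (if i = s then f s else 0)" for i
    by (simp add: indic_def)
  then show ?thesis
    by (simp add: sum.delta')
qed

locale sym_graph =
  fixes E :: "'n::finite \<Rightarrow> 'n \<Rightarrow> bool"
  assumes sym: "E i j \<Longrightarrow> E j i"
begin

abbreviation L :: "real^'n^'n" where
  "L \<equiv> laplacian E"

definition comp :: "'n \<Rightarrow> 'n set" where
  "comp i = {j. E\<^sup>*\<^sup>* i j}"

(* the orthogonal projection onto the kernel of L *)
definition comp_mean :: "real^'n^'n" where
  "comp_mean = (\<chi> i j. if j \<in> comp i then 1 / real (card (comp i)) else 0)"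

(* sums over ordered pairs, so every edge inside C is counted twice *)
definition energy :: "'n set \<Rightarrow> real^'n \<Rightarrow> real" where
  "energy C z = (\<Sum>i\<in>C. \<Sum>j\<in>C. if E i j then (z$i - z$j)\<^sup>2 else 0)"

lemma self_in_comp: "i \<in> comp i"
  by (simp add: comp_def)

lemma comp_closed: "j \<in> comp i \<Longrightarrow> E j k \<Longrightarrow> k \<in> comp i"
  by (simp add: comp_def)

lemma comp_eq:
  assumes "j \<in> comp i"
  shows "comp j = comp i"
proof -
  have "symp E\<^sup>*\<^sup>*"
    using sym by (intro symp_rtranclp sympI)
  then show ?thesis
    using assms unfolding comp_def by (auto dest: sympD intro: rtranclp_trans)
qed

lemma card_comp_pos: "card (comp i) > 0"
  using self_in_comp[of i] by (auto simp: card_gt_0_iff)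

lemma comp_mean_mult_vec:
  "(comp_mean *v z) $ i = (\<Sum>j\<in>comp i. z$j) / real (card (comp i))"
proof -
  have "(comp_mean *v z) $ i = (\<Sum>j\<in>UNIV. if j \<in> comp i then z$j / real (card (comp i)) else 0)"
    unfolding comp_mean_def matrix_vector_mult_def by simp (intro sum.cong; auto)
  then show ?thesis
    by (simp add: sum.inter_filter[symmetric] sum_divide_distrib)
qed

lemma comp_mean_const: "j \<in> comp i \<Longrightarrow> (comp_mean *v z) $ j = (comp_mean *v z) $ i"
  by (simp add: comp_mean_mult_vec comp_eq)

lemma sum_comp_const:
  assumes "\<And>j. j \<in> comp i \<Longrightarrow> z$j = c"
  shows "(\<Sum>j\<in>comp i. z$j) / real (card (comp i)) = c"
  using assms card_comp_pos[of i] by (simp add: card_gt_0_iff)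

lemma sum_mult_laplacian:
  assumes closed: "\<And>i j. i \<in> C \<Longrightarrow> E i j \<Longrightarrow> j \<in> C"
  shows "2 * (\<Sum>i\<in>C. w i * (L *v z) $ i) =
    (\<Sum>i\<in>C. \<Sum>j\<in>C. if E i j then (w i - w j) * (z$i - z$j) else 0)"
proof -
  let ?f = "\<lambda>i j. if E i j then w i * (z$i - z$j) else 0"
  have "(\<Sum>i\<in>C. w i * (L *v z) $ i) = (\<Sum>i\<in>C. \<Sum>j\<in>UNIV. ?f i j)"
    by (simp add: laplacian_mult_vec sum_distrib_left if_distrib cong: if_cong)
  also have "\<dots> = (\<Sum>i\<in>C. \<Sum>j\<in>C. ?f i j)"
    using closed by (intro sum.cong refl sum.mono_neutral_right) auto
  finally have half: "(\<Sum>i\<in>C. w i * (L *v z) $ i) = (\<Sum>i\<in>C. \<Sum>j\<in>C. ?f i j)" .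
  have "(\<Sum>i\<in>C. \<Sum>j\<in>C. ?f i j) = (\<Sum>i\<in>C. \<Sum>j\<in>C. ?f j i)"
    by (rule sum.swap)
  with half have "2 * (\<Sum>i\<in>C. w i * (L *v z) $ i) = (\<Sum>i\<in>C. \<Sum>j\<in>C. ?f i j + ?f j i)"
    by (simp add: sum.distrib)
  also have "\<dots> = (\<Sum>i\<in>C. \<Sum>j\<in>C. if E i j then (w i - w j) * (z$i - z$j) else 0)"
    using sym by (intro sum.cong refl) (auto simp: algebra_simps)
  finally show ?thesis .
qed

lemma sum_laplacian_closed:
  assumes "\<And>i j. i \<in> C \<Longrightarrow> E i j \<Longrightarrow> j \<in> C"
  shows "(\<Sum>i\<in>C. (L *v z) $ i) = 0"
  using sum_mult_laplacian[of C "\<lambda>_. 1" z] assms by (simp cong: if_cong)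

lemma energy_closed:
  assumes "\<And>i j. i \<in> C \<Longrightarrow> E i j \<Longrightarrow> j \<in> C"
  shows "energy C z = 2 * (\<Sum>i\<in>C. z$i * (L *v z) $ i)"
  using sum_mult_laplacian[of C "($) z" z] assms
  by (simp add: energy_def power2_eq_square cong: if_cong)

lemma energy_nonneg: "energy C z \<ge> 0"
  unfolding energy_def by (intro sum_nonneg) auto

lemma laplacian_comp_mean: "L *v (comp_mean *v z) = 0"
proof -
  have "(L *v (comp_mean *v z)) $ i = 0" for i
    unfolding laplacian_mult_vec
    by (intro sum.neutral) (simp add: comp_mean_const[OF comp_closed[OF self_in_comp]])
  then show ?thesis
    by (simp add: vec_eq_iff)
qed

lemma comp_mean_laplacian: "comp_mean *v (L *v z) = 0"
  by (simp add: vec_eq_iff comp_mean_mult_vec sum_laplacian_closed comp_closed)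

lemma comp_mean_idem: "comp_mean *v (comp_mean *v z) = comp_mean *v z"
proof -
  have "(comp_mean *v (comp_mean *v z)) $ i = (comp_mean *v z) $ i" for i
    by (subst comp_mean_mult_vec) (rule sum_comp_const, rule comp_mean_const)
  then show ?thesis
    by (simp add: vec_eq_iff)
qed

lemma transpose_comp_mean: "transpose comp_mean = comp_mean"
  unfolding comp_mean_def transpose_def
  by (simp add: vec_eq_iff) (metis comp_eq self_in_comp)

lemma transpose_laplacian: "transpose L = L"
  unfolding laplacian_def transpose_def
  by (simp add: vec_eq_iff) (metis sym)

lemma laplacian_kernel_const:
  assumes "L *v z = 0" and "j \<in> comp i"
  shows "z$j = z$i"
proof -
  have edge: "z$k = z$l" if "E k l" for k l
  proof -
    have "energy (comp k) z = 0"
      using energy_closed[of "comp k" z] assms(1) comp_closed by simp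
    then have "\<forall>x\<in>comp k. \<forall>y\<in>comp k. (if E x y then (z$x - z$y)\<^sup>2 else 0) = 0"
      unfolding energy_def by (simp add: sum_nonneg_eq_0_iff sum_nonneg)
    then have "(z$k - z$l)\<^sup>2 = 0"
      using self_in_comp[of k] comp_closed[OF self_in_comp that] that by fastforce
    then show ?thesis
      by simp
  qed
  have "E\<^sup>*\<^sup>* i j"
    using assms(2) by (simp add: comp_def)
  then show ?thesis
    by induction (auto dest: edge)
qed

lemma invertible_laplacian_plus_comp_mean: "invertible (L + comp_mean)"
proof -
  have "z = 0" if "(L + comp_mean) *v z = 0" for z
  proof -
    have "comp_mean *v ((L + comp_mean) *v z) = 0"
      using that by simp
    then have mean_z: "comp_mean *v z = 0"
      by (simp add: algebra_simps comp_mean_laplacian comp_mean_idem)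
    then have "L *v z = 0"
      using that by (simp add: algebra_simps)
    then have "(comp_mean *v z) $ i = z $ i" for i
      unfolding comp_mean_mult_vec by (intro sum_comp_const laplacian_kernel_const)
    then show ?thesis
      using mean_z by (simp add: vec_eq_iff)
  qed
  then show ?thesis
    by (simp add: invertible_left_inverse matrix_left_invertible_ker)
qed

lemma penrose_laplacian:
  obtains X where "penrose L X"
    and "\<And>x. comp_mean *v (X *v x) = 0"
    and "\<And>x. L *v (X *v x) = x - comp_mean *v x"
proof -
  let ?P = comp_mean
  obtain M where inv_left: "M ** (L + ?P) = mat 1" and inv_right: "(L + ?P) ** M = mat 1"
    using invertible_laplacian_plus_comp_mean invertible_def by blast
  have M_left: "M *v (L *v x) + M *v (?P *v x) = x" for x
    using arg_cong[OF inv_left, of "\<lambda>A. A *v x"]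
    by (simp add: matrix_vector_mul_assoc[symmetric] algebra_simps)
  have M_right: "L *v (M *v x) + ?P *v (M *v x) = x" for x
    using arg_cong[OF inv_right, of "\<lambda>A. A *v x"]
    by (simp add: matrix_vector_mul_assoc[symmetric] algebra_simps)
  have MP: "M *v (?P *v x) = ?P *v x" for x
    using M_left[of "?P *v x"] by (simp add: laplacian_comp_mean comp_mean_idem)
  have PM: "?P *v (M *v x) = ?P *v x" for x
    using arg_cong[OF M_right[of x], of "(*v) ?P"]
    by (simp add: algebra_simps comp_mean_laplacian comp_mean_idem)
  define X where "X = M - ?P"
  have PX: "?P *v (X *v x) = 0" for x
    by (simp add: X_def algebra_simps PM comp_mean_idem)
  have LX: "L *v (X *v x) = x - ?P *v x" for x
    using M_right[of x] by (simp add: X_def algebra_simps PM laplacian_comp_mean)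
  have XL: "X *v (L *v x) = x - ?P *v x" for x
    using M_left[of x] by (simp add: X_def algebra_simps MP comp_mean_laplacian)
  have XP: "X *v (?P *v x) = 0" for x
    by (simp add: X_def algebra_simps MP comp_mean_idem)
  have "L ** X = mat 1 - ?P" and "X ** L = mat 1 - ?P"
    unfolding matrix_eq by (simp_all add: matrix_vector_mul_assoc[symmetric] LX XL algebra_simps)
  moreover have "transpose (mat 1 - ?P) = mat 1 - ?P"
    by (simp add: transpose_diff transpose_comp_mean)
  moreover have "L ** X ** L = L" and "X ** L ** X = X"
    unfolding matrix_eq
    by (simp_all add: matrix_vector_mul_assoc[symmetric] LX XP algebra_simps comp_mean_laplacian)
  ultimately have "penrose L X"
    unfolding penrose_def by simp
  with PX LX show ?thesis
    using that by blast
qed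

lemma path_energy_le:
  assumes "distinct p" and "set p \<subseteq> C" and "length p = Suc m"
    and edge: "\<And>k. k < m \<Longrightarrow> E (p!k) (p!Suc k)"
  shows "2 * (\<Sum>k<m. (z$(p!k) - z$(p!Suc k))\<^sup>2) \<le> energy C z"
proof -
  define g where "g q = (z$(fst q) - z$(snd q))\<^sup>2" for q
  define fwd where "fwd k = (p!k, p!Suc k)" for k
  define bwd where "bwd k = (p!Suc k, p!k)" for k
  have nth_inj: "i = j" if "i \<le> m" "j \<le> m" "p!i = p!j" for i j
    using that nth_eq_iff_index_eq[OF assms(1), of i j] assms(3) by simp
  have "inj_on fwd {..<m}" and "inj_on bwd {..<m}"
    unfolding inj_on_def fwd_def bwd_def using nth_inj by auto
  then have sum_fwd: "sum g (fwd ` {..<m}) = (\<Sum>k<m. (z$(p!k) - z$(p!Suc k))\<^sup>2)"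
    and sum_bwd: "sum g (bwd ` {..<m}) = (\<Sum>k<m. (z$(p!k) - z$(p!Suc k))\<^sup>2)"
    by (simp_all add: sum.reindex) (simp_all add: g_def fwd_def bwd_def power2_commute)
  have "fwd k \<noteq> bwd l" if "k < m" and "l < m" for k l
  proof
    assume "fwd k = bwd l"
    then have "k = Suc l" and "Suc k = l"
      using nth_inj that by (auto simp: fwd_def bwd_def)
    then show False
      by simp
  qed
  then have "fwd ` {..<m} \<inter> bwd ` {..<m} = {}"
    by blast
  then have "2 * (\<Sum>k<m. (z$(p!k) - z$(p!Suc k))\<^sup>2) = sum g (fwd ` {..<m} \<union> bwd ` {..<m})"
    by (simp add: sum.union_disjoint sum_fwd sum_bwd)
  also have "\<dots> \<le> sum g {q \<in> C \<times> C. E (fst q) (snd q)}"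
  proof (rule sum_mono2)
    have "p!k \<in> C" and "p!Suc k \<in> C" if "k < m" for k
      using assms(2,3) that nth_mem[of k p] nth_mem[of "Suc k" p] by auto
    then show "fwd ` {..<m} \<union> bwd ` {..<m} \<subseteq> {q \<in> C \<times> C. E (fst q) (snd q)}"
      using edge sym by (auto simp: fwd_def bwd_def)
  qed (simp_all add: g_def)
  also have "\<dots> = (\<Sum>q\<in>C \<times> C. if E (fst q) (snd q) then g q else 0)"
    by (rule sum.inter_filter) simp
  also have "\<dots> = energy C z"
    unfolding energy_def g_def by (simp add: sum.cartesian_product case_prod_beta)
  finally show ?thesis .
qed

lemma sq_diff_le_energy:
  assumes "j \<in> comp i"
  shows "2 * (z$i - z$j)\<^sup>2 \<le> (real (card (comp i)) - 1) * energy (comp i) z"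
proof -
  obtain xs where "rtrancl_path E i xs j"
    using assms by (auto simp: comp_def rtranclp_eq_rtrancl_path)
  then obtain ps where path: "rtrancl_path E i ps j" and distinct: "distinct (i # ps)"
    by (rule rtrancl_path_distinct)
  define m where "m = length ps"
  define d where "d k = z$((i # ps)!k) - z$((i # ps)!Suc k)" for k
  have edge: "\<And>k. k < m \<Longrightarrow> E ((i # ps)!k) ((i # ps)!Suc k)" and last: "(i # ps)!m = j"
    using rtrancl_path_nth[OF path] unfolding m_def by auto
  have in_comp: "set (i # ps) \<subseteq> comp i"
    using rtrancl_path_reachable[OF path] by (auto simp: comp_def)
  then have "Suc m \<le> card (comp i)"
    using card_mono[OF finite in_comp] distinct_card[OF distinct] by (simp add: m_def)
  then have m_le: "real m \<le> real (card (comp i)) - 1"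
    by linarith
  have "(\<Sum>k<m. d k) = z$i - z$j"
    unfolding d_def using sum_lessThan_telescope'[of "\<lambda>k. z$((i # ps)!k)" m] last by simp
  then have "(z$i - z$j)\<^sup>2 \<le> (\<Sum>k<m. (d k)\<^sup>2) * real m"
    using sum_squared_le_sum_of_squares[of d "{..<m}"] by simp
  then have "2 * (z$i - z$j)\<^sup>2 \<le> real m * (2 * (\<Sum>k<m. (d k)\<^sup>2))"
    by (simp add: algebra_simps)
  also have "\<dots> \<le> real m * energy (comp i) z"
    using path_energy_le[OF distinct in_comp _ edge, where z = z]
    by (intro mult_left_mono) (simp_all add: d_def m_def)
  also have "\<dots> \<le> (real (card (comp i)) - 1) * energy (comp i) z"
    by (rule mult_right_mono[OF m_le energy_nonneg])
  finally show ?thesis .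
qed

lemma sum_comp_eq_0:
  assumes "comp_mean *v y = 0"
  shows "(\<Sum>j\<in>comp i. y$j) = 0"
proof -
  have "(\<Sum>j\<in>comp i. y$j) / real (card (comp i)) = 0"
    using assms comp_mean_mult_vec[of y i] by simp
  then show ?thesis
    using card_comp_pos[of i] by auto
qed

lemma energy_comp_pinv:
  assumes mean: "comp_mean *v y = 0" and lap: "L *v y = x - comp_mean *v x"
  shows "energy (comp u) y = 2 * (\<Sum>i\<in>comp u. y$i * x$i)"
proof -
  have "(\<Sum>i\<in>comp u. y$i * (comp_mean *v x)$i) = (\<Sum>i\<in>comp u. y$i) * (comp_mean *v x)$u"
    by (simp add: sum_distrib_right comp_mean_const)
  then have "(\<Sum>i\<in>comp u. y$i * (comp_mean *v x)$i) = 0"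
    using sum_comp_eq_0[OF mean] by simp
  then show ?thesis
    using energy_closed[of "comp u" y] comp_closed
    by (simp add: lap algebra_simps sum_subtractf)
qed

lemma pinv_coord_sq_le:
  assumes mean: "comp_mean *v y = 0"
    and lap: "L *v y = (indic s - indic t) - comp_mean *v (indic s - indic t)"
  shows "(y$u)\<^sup>2 \<le> (real (card (comp u)) - 1)\<^sup>2"
proof -
  define C where "C = comp u"
  define k where "k = real (card C)"
  define W where "W = (\<Sum>i\<in>C. y$i * (indic s - indic t)$i)"
  have k_ge_1: "k \<ge> 1"
    using card_comp_pos[of u] by (simp add: k_def C_def)
  have energy_W: "energy C y = 2 * W"
    unfolding C_def W_def by (rule energy_comp_pinv[OF mean lap])
  then have W_nonneg: "W \<ge> 0"
    using energy_nonneg[of C y] by simp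
  have diff_le: "(y$a - y$b)\<^sup>2 \<le> (k - 1) * W" if "a \<in> C" and "b \<in> C" for a b
  proof -
    have comp_a: "comp a = C"
      using comp_eq[of a u] that(1) unfolding C_def by simp
    with that(2) have "b \<in> comp a"
      by simp
    then show ?thesis
      using sq_diff_le_energy[of b a y] energy_W by (simp add: comp_a k_def)
  qed
  have coord_le: "(y$w)\<^sup>2 \<le> (k - 1) * W" if w: "w \<in> C" for w
  proof -
    obtain v where "v \<in> C" and "(y$w)\<^sup>2 \<le> (y$w - y$v)\<^sup>2"
      using exists_sq_le_sq_diff[of C w "($) y"] sum_comp_eq_0[OF mean] w
      unfolding C_def by auto
    then show ?thesis
      using diff_le[OF w \<open>v \<in> C\<close>] by linarith
  qed
  have "W = (if s \<in> C then y$s else 0) - (if t \<in> C then y$t else 0)"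
    by (simp add: W_def algebra_simps sum_subtractf sum_indic_mult)
  then have "W\<^sup>2 \<le> (k - 1) * W"
    using diff_le[of s t] coord_le[of s] coord_le[of t]
    by (cases "s \<in> C"; cases "t \<in> C") simp_all
  then have "W \<le> k - 1"
    using W_nonneg k_ge_1 by (cases "W = 0") (simp_all add: power2_eq_square)
  have "(y$u)\<^sup>2 \<le> (k - 1) * W"
    using coord_le self_in_comp unfolding C_def by blast
  also have "\<dots> \<le> (k - 1) * (k - 1)"
    using \<open>W \<le> k - 1\<close> k_ge_1 by (intro mult_left_mono) simp_all
  finally show ?thesis
    by (simp add: k_def C_def power2_eq_square)
qed

lemma pinv_norm_sq_le:
  assumes "comp_mean *v y = 0"
    and "L *v y = (indic s - indic t) - comp_mean *v (indic s - indic t)"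
  shows "y \<bullet> y \<le> real CARD('n) ^ 3"
proof -
  have "(y$u)\<^sup>2 \<le> (real CARD('n))\<^sup>2" for u
  proof -
    have "card (comp u) \<le> CARD('n)" and "card (comp u) > 0"
      by (simp_all add: card_mono card_comp_pos)
    then have "(real (card (comp u)) - 1)\<^sup>2 \<le> (real CARD('n))\<^sup>2"
      by (intro power_mono) auto
    then show ?thesis
      using pinv_coord_sq_le[OF assms, of u] by linarith
  qed
  then have "(\<Sum>u\<in>UNIV. (y$u)\<^sup>2) \<le> (\<Sum>u\<in>(UNIV::'n set). (real CARD('n))\<^sup>2)"
    by (rule sum_mono)
  then show ?thesis
    by (simp add: inner_vec_def power2_eq_square power3_eq_cube)
qed

end

theorem theoremA2:
  fixes E :: "'n::finite \<Rightarrow> 'n \<Rightarrow> bool" and s t :: 'n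
  assumes "simple_graph E"
  shows "(biharmonic_dist E s t)\<^sup>2 \<le> real (CARD('n)) ^ 3"
proof -
  interpret sym_graph E
    using assms by unfold_locales (simp add: simple_graph_def)
  obtain X where penrose: "penrose L X"
    and mean: "\<And>x. comp_mean *v (X *v x) = 0"
    and lap: "\<And>x. L *v (X *v x) = x - comp_mean *v x"
    by (rule penrose_laplacian) blast
  define y where "y = X *v (indic s - indic t)"
  have "biharmonic_dist E s t = sqrt (y \<bullet> y)"
    using inner_square_symmetric[OF penrose_symmetric[OF transpose_laplacian penrose]]
    by (simp add: biharmonic_dist_def pinv_eqI[OF penrose] y_def Let_def)
  then have "(biharmonic_dist E s t)\<^sup>2 = y \<bullet> y"
    by simp
  also have "\<dots> \<le> real CARD('n) ^ 3"
    unfolding y_def by (rule pinv_norm_sq_le[OF mean lap])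
  finally show ?thesis .
qed

end
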